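(* Let $f:\mathbb{R}^d\to\mathbb{R}$ be twice differentiable, $\mu$-strongly convex and $\alpha$-smooth ($0<\mu\le\alpha$), and suppose its Hessian is $\alpha$-Lipschitz, i.e. $\|\nabla^2f(u)-\nabla^2f(v)\|_2\le\alpha\|u-v\|$ for all $u,v$. Let $\kappa:=\alpha/\mu$ and $w_*:=\arg\min_w f(w)$. Let $(w_t)$ be generated by gradient descent with Polyak's momentum on $f$ with step size $\eta=1/\alpha$ and momentum parameter $\beta=(1-\tfrac{1}{2\sqrt\kappa})^2$, from initial points satisfying $$\left\|\begin{bmatrix}w_0-w_*\\ w_{-1}-w_*\end{bmatrix}\right\|\le\frac{1}{683\,\kappa^{3/2}}.$$ Then for every $t\ge0$, $$\left\|\begin{bmatrix}w_{t+1}-w_*\\ w_t-w_*\end{bmatrix}\right\|\le\Big(1-\frac{1}{4\sqrt\kappa}\Big)^{t+1}8\sqrt\kappa\left\|\begin{bmatrix}w_0-w_*\\ w_{-1}-w_*\end{bmatrix}\right\|.$$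
   Context: Gradient descent with Polyak's momentum (heavy ball): $w_{t+1}=w_t-\eta\nabla f(w_t)+\beta(w_t-w_{t-1})$ for $t\ge0$, given $w_0$ and $w_{-1}$ (in the algorithm $w_{-1}=w_0$). $\|\cdot\|_2$ is the spectral norm. *)

theory Defs
  imports "HOL-Analysis.Analysis"
begin

definition strongly_convex :: "real \<Rightarrow> ('a::real_normed_vector \<Rightarrow> real) \<Rightarrow> bool" where
  "strongly_convex \<mu> f \<longleftrightarrow>
     (\<forall>x y. \<forall>l::real. 0 \<le> l \<and> l \<le> 1 \<longrightarrow>
        f (l *\<^sub>R x + (1 - l) *\<^sub>R y)
          \<le> l * f x + (1 - l) * f y - \<mu> / 2 * l * (1 - l) * (norm (x - y))\<^sup>2)"

definition stack_norm :: "'a::real_normed_vector \<Rightarrow> 'a \<Rightarrow> real" where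
  "stack_norm a b = sqrt ((norm a)\<^sup>2 + (norm b)\<^sup>2)"

end

theory Submission
  imports Defs
begin

text \<open>
  Linearising the gradient at the minimiser, the heavy-ball iteration becomes the linear recursion
  \<open>x\<^sub>t\<^sub>+\<^sub>1 = ((1 + \<beta>) I - \<eta> H) x\<^sub>t - \<beta> x\<^sub>t\<^sub>-\<^sub>1\<close> with \<open>H = \<nabla>\<^sup>2f(w\<^sub>*)\<close>, perturbed by a
  term that is quadratic in the error because the Hessian is Lipschitz. The quadratic form
  \<open>V(x, y) = \<parallel>x\<parallel>\<^sup>2 - \<langle>x, ((1 + \<beta>) I - \<eta> H) y\<rangle> + \<beta> \<parallel>y\<parallel>\<^sup>2\<close> is multiplied by exactly \<open>\<beta> = (1 - \<delta>)\<^sup>2\<close>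
  by one linear step, and for \<open>\<mu> I \<le> H \<le> \<alpha> I\<close>, \<open>\<eta> = 1/\<alpha>\<close>, \<open>\<delta> = 1/(2\<surd>\<kappa>)\<close> it is equivalent
  to the squared stacked norm. Hence \<open>\<surd>V\<close> contracts by \<open>1 - \<delta>\<close> up to a quadratic error, and as
  long as the iterates stay close to \<open>w\<^sub>*\<close> this error eats at most half of the gain \<open>\<delta>\<close>.
\<close>

lemma le_of_forall_pos_le_add_mult:
  fixes x y c :: real
  assumes "\<And>t. 0 < t \<Longrightarrow> x \<le> y + t * c"
  shows "x \<le> y"
proof (rule field_le_epsilon)
  fix e :: real assume e: "0 < e"
  show "x \<le> y + e"
  proof (cases "c \<le> 0")
    case True
    then show ?thesis using assms[of 1] e by simp
  next
    case False
    then show ?thesis using assms[of "e / c"] e by simp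
  qed
qed

lemma abs_diff_le_of_deriv_bound:
  fixes \<phi> \<phi>' :: "real \<Rightarrow> real"
  assumes t: "0 < t"
    and deriv: "\<And>s. 0 \<le> s \<Longrightarrow> s \<le> t \<Longrightarrow> (\<phi> has_real_derivative \<phi>' s) (at s)"
    and bound: "\<And>s. 0 \<le> s \<Longrightarrow> s \<le> t \<Longrightarrow> \<bar>\<phi>' s\<bar> \<le> B"
  shows "\<bar>\<phi> t - \<phi> 0\<bar> \<le> B * t"
proof -
  obtain z where z: "0 < z" "z < t" "\<phi> t - \<phi> 0 = (t - 0) * \<phi>' z"
    using MVT2[of 0 t \<phi> \<phi>'] t deriv by auto
  have "\<bar>\<phi> t - \<phi> 0\<bar> = t * \<bar>\<phi>' z\<bar>" using z t by (simp add: abs_mult)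
  also have "\<dots> \<le> t * B" using bound[of z] z t by (intro mult_left_mono) auto
  finally show ?thesis by (simp add: mult.commute)
qed

lemma has_real_derivative_along_line:
  fixes f :: "'a::real_inner \<Rightarrow> real"
  assumes "\<And>x. (f has_derivative (\<lambda>h. grad x \<bullet> h)) (at x)"
  shows "((\<lambda>s. f (p + s *\<^sub>R v)) has_real_derivative (grad (p + s *\<^sub>R v) \<bullet> v)) (at s)"
proof -
  have line: "((\<lambda>s. p + s *\<^sub>R v) has_derivative (\<lambda>h. h *\<^sub>R v)) (at s)"
    by (auto intro!: derivative_eq_intros)
  have "((f \<circ> (\<lambda>s. p + s *\<^sub>R v)) has_derivative
          ((\<lambda>h. grad (p + s *\<^sub>R v) \<bullet> h) \<circ> (\<lambda>h. h *\<^sub>R v))) (at s)"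
    by (rule diff_chain_at[OF line assms])
  moreover have "(\<lambda>h. grad (p + s *\<^sub>R v) \<bullet> h) \<circ> (\<lambda>h. h *\<^sub>R v) = (*) (grad (p + s *\<^sub>R v) \<bullet> v)"
    by (auto simp: fun_eq_iff)
  ultimately show ?thesis
    by (simp add: has_field_derivative_def o_def)
qed

lemma grad_eq_0_at_minimum:
  fixes f :: "'a::real_inner \<Rightarrow> real"
  assumes "(f has_derivative (\<lambda>h. g \<bullet> h)) (at x)" and "\<And>y. f x \<le> f y"
  shows "g = 0"
proof -
  have "(\<lambda>h. g \<bullet> h) = (\<lambda>h. 0)"
    by (rule differential_zero_maxmin[of x UNIV f]) (use assms in auto)
  then have "g \<bullet> g = 0" by metis
  then show ?thesis by simp
qed

lemma cocoercive_of_symmetric_bounded: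
  fixes A :: "'a::real_inner \<Rightarrow> 'a"
  assumes lin: "linear A" and sym: "\<And>u v. u \<bullet> A v = v \<bullet> A u"
    and psd: "\<And>y. 0 \<le> y \<bullet> A y" and bound: "\<And>y. norm (A y) \<le> M * norm y" and M: "0 < M"
  shows "(norm (A y))\<^sup>2 \<le> M * (y \<bullet> A y)"
proof -
  let ?z = "A y" and ?s = "1 / M"
  have "0 \<le> (y - ?s *\<^sub>R ?z) \<bullet> A (y - ?s *\<^sub>R ?z)" by (rule psd)
  also have "\<dots> = y \<bullet> A y - 2 * ?s * (?z \<bullet> ?z) + ?s * ?s * (?z \<bullet> A ?z)"
    using sym[of y ?z] lin
    by (simp add: linear_diff linear_scale inner_diff_left inner_diff_right inner_commute algebra_simps)
  finally have expand: "0 \<le> y \<bullet> A y - 2 * ?s * (?z \<bullet> ?z) + ?s * ?s * (?z \<bullet> A ?z)" .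
  have "?z \<bullet> A ?z \<le> norm ?z * norm (A ?z)" by (rule order_trans[OF abs_ge_self Cauchy_Schwarz_ineq2])
  also have "\<dots> \<le> norm ?z * (M * norm ?z)" by (intro mult_left_mono bound) auto
  finally have "?z \<bullet> A ?z \<le> M * (?z \<bullet> ?z)"
    by (simp add: power2_norm_eq_inner[symmetric] power2_eq_square mult_ac)
  then have "?s * ?s * (?z \<bullet> A ?z) \<le> ?s * (?z \<bullet> ?z)"
    using M mult_left_mono[of _ _ "?s * ?s"] by (simp add: field_simps)
  then have "?s * (?z \<bullet> ?z) \<le> y \<bullet> A y" using expand by linarith
  then show ?thesis using M by (simp add: power2_norm_eq_inner field_simps)
qed

lemma contraction_with_quadratic_perturbation:
  fixes N :: "nat \<Rightarrow> real"
  assumes step: "\<And>n. N (Suc n) \<le> (1 - \<delta>) * N n + C * (N n)\<^sup>2"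
    and nonneg: "\<And>n. 0 \<le> N n" and \<delta>: "0 \<le> \<delta>" "\<delta> \<le> 2" and C: "0 \<le> C"
    and small: "C * N 0 \<le> \<delta> / 2"
  shows "N n \<le> (1 - \<delta> / 2) ^ n * N 0"
proof (induction n)
  case 0
  then show ?case by simp
next
  case (Suc n)
  let ?\<theta> = "1 - \<delta> / 2"
  have \<theta>: "0 \<le> ?\<theta>" "?\<theta> \<le> 1" using \<delta> by auto
  have "?\<theta> ^ n * N 0 \<le> N 0" using \<theta> nonneg[of 0] by (simp add: mult_left_le_one_le power_le_one)
  then have "C * N n \<le> \<delta> / 2" using Suc.IH small C mult_left_mono[of "N n" "N 0" C] by linarith
  then have "C * (N n)\<^sup>2 \<le> \<delta> / 2 * N n"
    using nonneg[of n] mult_right_mono[of "C * N n" "\<delta> / 2" "N n"] by (simp add: power2_eq_square mult_ac)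
  then have "N (Suc n) \<le> ?\<theta> * N n" using step[of n] by (simp add: algebra_simps)
  also have "\<dots> \<le> ?\<theta> * (?\<theta> ^ n * N 0)" using Suc.IH \<theta> by (intro mult_left_mono) auto
  finally show ?case by simp
qed

lemma powr_three_halves: "0 \<le> x \<Longrightarrow> x powr (3/2) = sqrt x ^ 3"
  using powr_add[of x 1 "1/2"] by (simp add: powr_half_sqrt power3_eq_cube)

locale lipschitz_hessian =
  fixes f :: "real^'d \<Rightarrow> real"
    and grad :: "real^'d \<Rightarrow> real^'d"
    and hess :: "real^'d \<Rightarrow> real^'d^'d"
    and L :: real
  assumes has_gradient: "\<And>x. (f has_derivative (\<lambda>h. grad x \<bullet> h)) (at x)"
    and has_hessian: "\<And>x. (grad has_derivative (\<lambda>h. hess x *v h)) (at x)"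
    and hessian_lipschitz: "\<And>u v. onorm (\<lambda>h. (hess u - hess v) *v h) \<le> L * norm (u - v)"
    and L_nonneg: "0 \<le> L"
begin

lemma gradient_linearization_error:
  "norm (grad b - grad a - hess a *v (b - a)) \<le> L * (norm (b - a))\<^sup>2"
proof -
  let ?S = "cball a (norm (b - a))"
  have "norm (grad b - grad a - hess a *v (b - a)) \<le> norm (b - a) * (L * norm (b - a))"
  proof (rule differentiable_bound_linearization[where S="?S" and f'="\<lambda>x h. hess x *v h"])
    fix t :: real assume "t \<in> {0..1}"
    then show "a + t *\<^sub>R (b - a) \<in> ?S"
      by (auto simp: dist_norm abs_mult intro!: mult_left_le_one_le)
  next
    fix x assume "x \<in> ?S"
    show "(grad has_derivative (\<lambda>h. hess x *v h)) (at x within ?S)"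
      using has_hessian has_derivative_at_withinI by blast
  next
    fix x assume x: "x \<in> ?S"
    have "(\<lambda>h. hess x *v h) - (\<lambda>h. hess a *v h) = (\<lambda>h. (hess x - hess a) *v h)"
      by (auto simp: fun_eq_iff matrix_vector_mult_diff_rdistrib)
    moreover have "onorm (\<lambda>h. (hess x - hess a) *v h) \<le> L * norm (x - a)" by (rule hessian_lipschitz)
    moreover have "L * norm (x - a) \<le> L * norm (b - a)"
      using x L_nonneg by (intro mult_left_mono) (auto simp: dist_norm norm_minus_commute)
    ultimately show "onorm ((\<lambda>h. hess x *v h) - (\<lambda>h. hess a *v h)) \<le> L * norm (b - a)" by simp
  qed auto
  then show ?thesis by (simp add: power2_eq_square mult_ac)
qed

lemma norm_hessian_diff_apply: "norm ((hess q - hess p) *v v) \<le> L * norm (q - p) * norm v"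
proof -
  have "norm ((hess q - hess p) *v v) \<le> onorm (\<lambda>h. (hess q - hess p) *v h) * norm v"
    by (rule onorm) simp
  also have "\<dots> \<le> L * norm (q - p) * norm v"
    by (intro mult_right_mono hessian_lipschitz) auto
  finally show ?thesis .
qed

lemma gradient_increment_deviation:
  assumes "0 \<le> s" "s \<le> t"
  shows "norm (grad (p + s *\<^sub>R x + t *\<^sub>R y) - grad (p + s *\<^sub>R x) - t *\<^sub>R (hess p *v y))
         \<le> L * t\<^sup>2 * (norm y * (norm x + norm y))"
proof -
  define q where "q = p + s *\<^sub>R x"
  have split: "grad (q + t *\<^sub>R y) - grad q - t *\<^sub>R (hess p *v y)
    = (grad (q + t *\<^sub>R y) - grad q - hess q *v ((q + t *\<^sub>R y) - q)) + (hess q - hess p) *v (t *\<^sub>R y)"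
    by (simp add: matrix_vector_mult_diff_rdistrib matrix_vector_mult_scaleR algebra_simps)
  have "norm (grad (q + t *\<^sub>R y) - grad q - hess q *v ((q + t *\<^sub>R y) - q)) \<le> L * (t * norm y)\<^sup>2"
    using gradient_linearization_error[of "q + t *\<^sub>R y" q] assms by simp
  moreover have "norm ((hess q - hess p) *v (t *\<^sub>R y)) \<le> L * (s * norm x) * (t * norm y)"
    using norm_hessian_diff_apply[of q p "t *\<^sub>R y"] assms by (simp add: q_def)
  moreover have "L * (s * norm x) * (t * norm y) \<le> L * (t * norm x) * (t * norm y)"
    using assms L_nonneg by (intro mult_right_mono mult_left_mono) auto
  ultimately have "norm (grad (q + t *\<^sub>R y) - grad q - t *\<^sub>R (hess p *v y))
      \<le> L * (t * norm y)\<^sup>2 + L * (t * norm x) * (t * norm y)"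
    unfolding split by (smt (verit) norm_triangle_ineq)
  also have "\<dots> = L * t\<^sup>2 * (norm y * (norm x + norm y))" by (simp add: power2_eq_square algebra_simps)
  finally show ?thesis by (simp add: q_def)
qed

lemma mixed_second_difference:
  assumes t: "0 < t"
  shows "\<bar>f (p + t *\<^sub>R y + t *\<^sub>R x) - f (p + t *\<^sub>R x) - f (p + t *\<^sub>R y) + f p - t\<^sup>2 * (x \<bullet> (hess p *v y))\<bar>
         \<le> L * t ^ 3 * (norm x * norm y * (norm x + norm y))"
proof -
  define c where "c = t * (x \<bullet> (hess p *v y))"
  define \<phi> where "\<phi> s = f (p + t *\<^sub>R y + s *\<^sub>R x) - f (p + s *\<^sub>R x) - s * c" for s
  define \<phi>' where "\<phi>' s = grad (p + t *\<^sub>R y + s *\<^sub>R x) \<bullet> x - grad (p + s *\<^sub>R x) \<bullet> x - c" for s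
  have "\<bar>\<phi> t - \<phi> 0\<bar> \<le> L * t\<^sup>2 * (norm x * norm y * (norm x + norm y)) * t"
  proof (rule abs_diff_le_of_deriv_bound[OF t])
    fix s :: real
    show "(\<phi> has_real_derivative \<phi>' s) (at s)"
      unfolding \<phi>_def \<phi>'_def
      by (intro DERIV_diff has_real_derivative_along_line[OF has_gradient])
        (auto intro!: derivative_eq_intros)
  next
    fix s :: real assume s: "0 \<le> s" "s \<le> t"
    let ?d = "grad (p + s *\<^sub>R x + t *\<^sub>R y) - grad (p + s *\<^sub>R x) - t *\<^sub>R (hess p *v y)"
    have "\<phi>' s = ?d \<bullet> x"
      unfolding \<phi>'_def c_def by (simp add: inner_diff_left inner_commute algebra_simps)
    then have "\<bar>\<phi>' s\<bar> \<le> norm ?d * norm x" by (simp add: Cauchy_Schwarz_ineq2)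
    also have "\<dots> \<le> L * t\<^sup>2 * (norm y * (norm x + norm y)) * norm x"
      by (intro mult_right_mono gradient_increment_deviation s) auto
    finally show "\<bar>\<phi>' s\<bar> \<le> L * t\<^sup>2 * (norm x * norm y * (norm x + norm y))"
      by (simp add: algebra_simps)
  qed
  then show ?thesis
    by (simp add: \<phi>_def c_def power2_eq_square power3_eq_cube algebra_simps)
qed

lemma hessian_symmetric: "x \<bullet> (hess p *v y) = y \<bullet> (hess p *v x)"
proof -
  let ?K = "norm x * norm y * (norm x + norm y)"
  have "\<bar>x \<bullet> (hess p *v y) - y \<bullet> (hess p *v x)\<bar> \<le> 0"
  proof (rule le_of_forall_pos_le_add_mult)
    fix t :: real assume t: "0 < t"
    let ?F = "f (p + t *\<^sub>R y + t *\<^sub>R x) - f (p + t *\<^sub>R x) - f (p + t *\<^sub>R y) + f p"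
    have swap: "p + t *\<^sub>R x + t *\<^sub>R y = p + t *\<^sub>R y + t *\<^sub>R x" by (simp add: algebra_simps)
    have K: "norm y * norm x * (norm y + norm x) = ?K" by (simp add: algebra_simps)
    \<comment> \<open>the mixed second differences of \<open>f\<close> in directions \<open>x, y\<close> and \<open>y, x\<close> coincide\<close>
    have "\<bar>?F - t\<^sup>2 * (x \<bullet> (hess p *v y))\<bar> \<le> L * t ^ 3 * ?K"
      by (rule mixed_second_difference[OF t])
    moreover have "\<bar>?F - t\<^sup>2 * (y \<bullet> (hess p *v x))\<bar> \<le> L * t ^ 3 * ?K"
    proof -
      have "?F - t\<^sup>2 * (y \<bullet> (hess p *v x))
          = f (p + t *\<^sub>R x + t *\<^sub>R y) - f (p + t *\<^sub>R y) - f (p + t *\<^sub>R x) + f p - t\<^sup>2 * (y \<bullet> (hess p *v x))"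
        unfolding swap by linarith
      then show ?thesis using mixed_second_difference[OF t, of p x y] unfolding K by argo
    qed
    moreover have "t\<^sup>2 * \<bar>x \<bullet> (hess p *v y) - y \<bullet> (hess p *v x)\<bar>
        = \<bar>(?F - t\<^sup>2 * (y \<bullet> (hess p *v x))) - (?F - t\<^sup>2 * (x \<bullet> (hess p *v y)))\<bar>"
      by (subst abs_of_nonneg[of "t\<^sup>2", symmetric], simp, subst abs_mult[symmetric])
        (simp add: algebra_simps)
    ultimately have "t\<^sup>2 * \<bar>x \<bullet> (hess p *v y) - y \<bullet> (hess p *v x)\<bar> \<le> 2 * (L * t ^ 3 * ?K)"
      by linarith
    then have "t\<^sup>2 * \<bar>x \<bullet> (hess p *v y) - y \<bullet> (hess p *v x)\<bar> \<le> t\<^sup>2 * (t * (2 * L * ?K))"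
      by (simp add: power2_eq_square power3_eq_cube mult_ac)
    then show "\<bar>x \<bullet> (hess p *v y) - y \<bullet> (hess p *v x)\<bar> \<le> 0 + t * (2 * L * ?K)"
      using t by (simp add: mult_le_cancel_left)
  qed
  then show ?thesis by simp
qed

lemma second_order_upper_at_critical:
  assumes t: "0 < t" and crit: "grad p = 0"
  shows "f (p + t *\<^sub>R y) - f p \<le> t\<^sup>2 / 2 * (y \<bullet> (hess p *v y)) + L * t ^ 3 * norm y ^ 3"
proof -
  define c where "c = y \<bullet> (hess p *v y)"
  define \<psi> where "\<psi> s = f (p + s *\<^sub>R y) - s\<^sup>2 / 2 * c" for s
  define \<psi>' where "\<psi>' s = grad (p + s *\<^sub>R y) \<bullet> y - s * c" for s
  have "\<bar>\<psi> t - \<psi> 0\<bar> \<le> L * t\<^sup>2 * norm y ^ 3 * t"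
  proof (rule abs_diff_le_of_deriv_bound[OF t])
    fix s :: real
    show "(\<psi> has_real_derivative \<psi>' s) (at s)"
      unfolding \<psi>_def \<psi>'_def
      by (intro DERIV_diff has_real_derivative_along_line[OF has_gradient])
        (auto intro!: derivative_eq_intros)
  next
    fix s :: real assume s: "0 \<le> s" "s \<le> t"
    let ?d = "grad (p + s *\<^sub>R y) - grad p - hess p *v ((p + s *\<^sub>R y) - p)"
    have "\<psi>' s = ?d \<bullet> y"
      unfolding \<psi>'_def c_def using crit
      by (simp add: inner_diff_left inner_diff_right matrix_vector_mult_scaleR inner_commute)
    then have "\<bar>\<psi>' s\<bar> \<le> norm ?d * norm y" by (simp add: Cauchy_Schwarz_ineq2)
    also have "\<dots> \<le> L * (s * norm y)\<^sup>2 * norm y"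
      using gradient_linearization_error[of "p + s *\<^sub>R y" p] s by (intro mult_right_mono) auto
    also have "\<dots> \<le> L * (t * norm y)\<^sup>2 * norm y"
      using s L_nonneg by (intro mult_right_mono mult_left_mono power_mono) auto
    finally show "\<bar>\<psi>' s\<bar> \<le> L * t\<^sup>2 * norm y ^ 3"
      by (simp add: power2_eq_square power3_eq_cube algebra_simps)
  qed
  then show ?thesis
    by (simp add: \<psi>_def c_def power2_eq_square power3_eq_cube algebra_simps)
qed

lemma hessian_lower_bound_at_critical:
  assumes crit: "grad p = 0" and sconv: "strongly_convex \<mu> f"
  shows "\<mu> * (norm y)\<^sup>2 \<le> y \<bullet> (hess p *v y)"
proof -
  have "\<mu> * (norm y)\<^sup>2 \<le> y \<bullet> (hess p *v y) + 0"
  proof (rule le_of_forall_pos_le_add_mult)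
    fix t :: real assume t: "0 < t"
    have mid: "(1/2) *\<^sub>R (p + t *\<^sub>R y) + (1 - 1/2) *\<^sub>R (p - t *\<^sub>R y) = p"
      by (simp add: algebra_simps scaleR_2[symmetric])
    have "(p + t *\<^sub>R y) - (p - t *\<^sub>R y) = t *\<^sub>R y + t *\<^sub>R y" by simp
    also have "\<dots> = (2 * t) *\<^sub>R y" by (metis mult_2 scaleR_left_distrib)
    finally have dist: "norm ((p + t *\<^sub>R y) - (p - t *\<^sub>R y)) = 2 * t * norm y" using t by simp
    have reflect: "p + t *\<^sub>R (- y) = p - t *\<^sub>R y" by simp
    have even: "(- y) \<bullet> (hess p *v (- y)) = y \<bullet> (hess p *v y)"
      using matrix_vector_mult_scaleR[of "hess p" "-1" y] by simp
    \<comment> \<open>strong convexity at the midpoint \<open>p\<close> of \<open>p \<plusminus> t y\<close>, against the cubic Taylor bound\<close>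
    have "f p \<le> (f (p + t *\<^sub>R y) + f (p - t *\<^sub>R y)) / 2 - \<mu> / 2 * t\<^sup>2 * (norm y)\<^sup>2"
      using sconv[unfolded strongly_convex_def, rule_format, of "1/2" "p + t *\<^sub>R y" "p - t *\<^sub>R y"]
      unfolding mid dist by (simp add: power2_eq_square field_simps)
    then have "t\<^sup>2 * (\<mu> * (norm y)\<^sup>2) \<le> t\<^sup>2 * (y \<bullet> (hess p *v y) + t * (2 * L * norm y ^ 3))"
      using second_order_upper_at_critical[OF t crit, of y] second_order_upper_at_critical[OF t crit, of "- y"]
      unfolding reflect even norm_minus_cancel
      by (simp add: power3_eq_cube power2_eq_square algebra_simps)
    then show "\<mu> * (norm y)\<^sup>2 \<le> (y \<bullet> (hess p *v y) + 0) + t * (2 * L * norm y ^ 3)"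
      using t by (simp add: mult_le_cancel_left)
  qed
  then show ?thesis by simp
qed

lemma hessian_bound_of_gradient_lipschitz:
  assumes smooth: "\<And>u v. norm (grad u - grad v) \<le> M * norm (u - v)"
  shows "norm (hess p *v y) \<le> M * norm y"
proof -
  have "norm (hess p *v y) \<le> M * norm y + 0"
  proof (rule le_of_forall_pos_le_add_mult)
    fix t :: real assume t: "0 < t"
    let ?e = "grad (p + t *\<^sub>R y) - grad p - hess p *v ((p + t *\<^sub>R y) - p)"
    have "t *\<^sub>R (hess p *v y) = (grad (p + t *\<^sub>R y) - grad p) - ?e"
      by (simp add: matrix_vector_mult_scaleR)
    then have "t * norm (hess p *v y) \<le> norm (grad (p + t *\<^sub>R y) - grad p) + norm ?e"
      using t norm_triangle_ineq4 by (metis abs_of_pos norm_scaleR)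
    also have "\<dots> \<le> M * (t * norm y) + L * (t * norm y)\<^sup>2"
      using smooth[of "p + t *\<^sub>R y" p] gradient_linearization_error[of "p + t *\<^sub>R y" p] t
      by (intro add_mono) auto
    also have "\<dots> = t * (M * norm y + t * (L * (norm y)\<^sup>2))" by (simp add: power2_eq_square algebra_simps)
    finally show "norm (hess p *v y) \<le> (M * norm y + 0) + t * (L * (norm y)\<^sup>2)"
      using t by (simp add: mult_le_cancel_left)
  qed
  then show ?thesis by simp
qed

end

locale momentum_lyapunov =
  fixes A :: "'a::real_inner \<Rightarrow> 'a" and \<mu> \<alpha> \<eta> \<delta> :: real
  assumes symmetric: "\<And>u v. u \<bullet> A v = v \<bullet> A u"
    and strongly_positive: "\<And>y. \<mu> * (norm y)\<^sup>2 \<le> y \<bullet> A y"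
    and cocoercive: "\<And>y. (norm (A y))\<^sup>2 \<le> \<alpha> * (y \<bullet> A y)"
    and eta_pos: "0 < \<eta>" and eta_alpha: "\<eta> * \<alpha> = 1" and eta_mu: "\<eta> * \<mu> = 4 * \<delta>\<^sup>2"
    and delta_pos: "0 < \<delta>" and delta_le: "\<delta> \<le> 1/2"
begin

definition "\<beta> = (1 - \<delta>)\<^sup>2"

definition "M y = (1 + \<beta>) *\<^sub>R y - \<eta> *\<^sub>R A y"

definition "V x y = (norm x)\<^sup>2 - x \<bullet> M y + \<beta> * (norm y)\<^sup>2"

lemma M_symmetric: "u \<bullet> M v = v \<bullet> M u"
  unfolding M_def by (simp add: inner_diff_right inner_commute symmetric)

lemma beta_pos: "0 < \<beta>" and beta_le_1: "\<beta> \<le> 1"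
  using delta_pos delta_le unfolding \<beta>_def by (auto simp: power2_eq_square intro: mult_le_one)

lemma V_linear_step: "V (M x - \<beta> *\<^sub>R y) x = \<beta> * V x y"
proof -
  have "V (M x - \<beta> *\<^sub>R y) x = (M x - \<beta> *\<^sub>R y) \<bullet> (M x - \<beta> *\<^sub>R y) - (M x - \<beta> *\<^sub>R y) \<bullet> M x + \<beta> * (x \<bullet> x)"
    unfolding V_def by (simp add: power2_norm_eq_inner)
  also have "\<dots> = \<beta> * (x \<bullet> x) - \<beta> * (y \<bullet> M x) + \<beta> * \<beta> * (y \<bullet> y)"
    by (simp add: inner_diff_left inner_diff_right inner_commute algebra_simps)
  also have "\<dots> = \<beta> * V x y"
    unfolding V_def using M_symmetric[of x y] by (simp add: power2_norm_eq_inner algebra_simps)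
  finally show ?thesis .
qed

lemma norm_M_sq_le: "(norm (M y))\<^sup>2 \<le> ((1 + \<beta>)\<^sup>2 - (1 + 2 * \<beta>) * (4 * \<delta>\<^sup>2)) * (norm y)\<^sup>2"
proof -
  let ?q = "y \<bullet> A y"
  have expand: "(norm (M y))\<^sup>2 = (1 + \<beta>)\<^sup>2 * (norm y)\<^sup>2 - 2 * (1 + \<beta>) * \<eta> * ?q + \<eta>\<^sup>2 * (norm (A y))\<^sup>2"
    unfolding M_def power2_norm_eq_inner
    by (simp add: inner_diff_left inner_diff_right inner_commute power2_eq_square algebra_simps)
  have "\<eta>\<^sup>2 * (norm (A y))\<^sup>2 \<le> \<eta>\<^sup>2 * (\<alpha> * ?q)" using cocoercive[of y] by (intro mult_left_mono) auto
  also have "\<dots> = \<eta> * ?q" using eta_alpha by (simp add: power2_eq_square algebra_simps)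
  finally have upper: "\<eta>\<^sup>2 * (norm (A y))\<^sup>2 \<le> \<eta> * ?q" .
  have "(1 + 2 * \<beta>) * (4 * \<delta>\<^sup>2) * (norm y)\<^sup>2 = (1 + 2 * \<beta>) * \<eta> * (\<mu> * (norm y)\<^sup>2)"
    using eta_mu by (simp add: mult_ac)
  also have "\<dots> \<le> (1 + 2 * \<beta>) * \<eta> * ?q"
    using strongly_positive[of y] beta_pos eta_pos by (intro mult_left_mono) auto
  finally show ?thesis using expand upper by (simp add: algebra_simps)
qed

lemma norm_M_le: "norm (M y) \<le> 2 * norm y"
proof -
  have "(1 + \<beta>)\<^sup>2 \<le> 4" using beta_pos beta_le_1 power_mono[of "1 + \<beta>" 2 2] by simp
  moreover have "0 \<le> (1 + 2 * \<beta>) * (4 * \<delta>\<^sup>2)" using beta_pos by (intro mult_nonneg_nonneg) auto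
  ultimately have "(1 + \<beta>)\<^sup>2 - (1 + 2 * \<beta>) * (4 * \<delta>\<^sup>2) \<le> 4" by linarith
  then have "((1 + \<beta>)\<^sup>2 - (1 + 2 * \<beta>) * (4 * \<delta>\<^sup>2)) * (norm y)\<^sup>2 \<le> 4 * (norm y)\<^sup>2"
    by (rule mult_right_mono) simp
  then have "(norm (M y))\<^sup>2 \<le> (2 * norm y)\<^sup>2"
    using norm_M_sq_le[of y] by (simp add: power_mult_distrib)
  then show ?thesis by (rule power2_le_imp_le) simp
qed

lemma V_complete_square: "V x y = (norm (x - (1/2) *\<^sub>R M y))\<^sup>2 + (\<beta> * (norm y)\<^sup>2 - (norm (M y))\<^sup>2 / 4)"
  unfolding V_def power2_norm_eq_inner
  by (simp add: inner_diff_left inner_diff_right inner_commute algebra_simps)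

lemma V_residual_lower: "3/4 * \<delta>\<^sup>2 * (norm y)\<^sup>2 \<le> \<beta> * (norm y)\<^sup>2 - (norm (M y))\<^sup>2 / 4"
proof -
  have poly: "4 * \<beta> - ((1 + \<beta>)\<^sup>2 - (1 + 2 * \<beta>) * (4 * \<delta>\<^sup>2)) = \<delta>\<^sup>2 * (8 - 12 * \<delta> + 7 * \<delta>\<^sup>2)"
    unfolding \<beta>_def by (simp add: power2_eq_square algebra_simps)
  have "0 \<le> (1 - \<delta>) * (5 - 7 * \<delta>)" using delta_le by (intro mult_nonneg_nonneg) auto
  then have "3 \<le> 8 - 12 * \<delta> + 7 * \<delta>\<^sup>2" by (simp add: power2_eq_square algebra_simps)
  from mult_left_mono[OF this, of "\<delta>\<^sup>2"]
  have "3/4 * \<delta>\<^sup>2 \<le> (4 * \<beta> - ((1 + \<beta>)\<^sup>2 - (1 + 2 * \<beta>) * (4 * \<delta>\<^sup>2))) / 4"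
    unfolding poly by simp
  then have "3/4 * \<delta>\<^sup>2 * (norm y)\<^sup>2 \<le> (4 * \<beta> - ((1 + \<beta>)\<^sup>2 - (1 + 2 * \<beta>) * (4 * \<delta>\<^sup>2))) / 4 * (norm y)\<^sup>2"
    by (intro mult_right_mono) auto
  then show ?thesis using norm_M_sq_le[of y] by (simp add: field_simps)
qed

lemma V_lower: "\<delta>\<^sup>2 / 4 * ((norm x)\<^sup>2 + (norm y)\<^sup>2) \<le> V x y"
proof -
  let ?U = "(norm (x - (1/2) *\<^sub>R M y))\<^sup>2"
  have "norm x \<le> norm (x - (1/2) *\<^sub>R M y) + norm ((1/2) *\<^sub>R M y)"
    by (metis norm_triangle_ineq diff_add_cancel)
  also have "norm ((1/2) *\<^sub>R M y) \<le> norm y" using norm_M_le[of y] by simp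
  finally have "(norm x)\<^sup>2 \<le> (norm (x - (1/2) *\<^sub>R M y) + norm y)\<^sup>2" by (intro power_mono) auto
  also have "\<dots> \<le> 2 * ?U + 2 * (norm y)\<^sup>2"
    using zero_le_power2[of "norm (x - (1/2) *\<^sub>R M y) - norm y"] by (simp add: power2_eq_square algebra_simps)
  finally have x: "(norm x)\<^sup>2 \<le> 2 * ?U + 2 * (norm y)\<^sup>2" .
  have "\<delta> * \<delta> \<le> (1/2) * (1/2)" using delta_pos delta_le by (intro mult_mono) auto
  then have "\<delta>\<^sup>2 / 2 * ?U \<le> ?U" by (intro mult_left_le_one_le) (auto simp: power2_eq_square)
  moreover have "\<delta>\<^sup>2 / 4 * ((norm x)\<^sup>2 + (norm y)\<^sup>2) \<le> \<delta>\<^sup>2 / 4 * (2 * ?U + 3 * (norm y)\<^sup>2)"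
    using x by (intro mult_left_mono) auto
  ultimately show ?thesis
    using V_complete_square[of x y] V_residual_lower[of y] by (simp add: algebra_simps)
qed

lemma V_nonneg: "0 \<le> V x y"
  by (rule order_trans[OF _ V_lower]) (simp add: delta_pos)

lemma V_upper: "V x y \<le> 2 * ((norm x)\<^sup>2 + (norm y)\<^sup>2)"
proof -
  have "- (x \<bullet> M y) \<le> norm x * norm (M y)"
    using Cauchy_Schwarz_ineq2[of x "M y"] by linarith
  also have "\<dots> \<le> norm x * (2 * norm y)" by (intro mult_left_mono norm_M_le) auto
  also have "\<dots> \<le> (norm x)\<^sup>2 + (norm y)\<^sup>2"
    using zero_le_power2[of "norm x - norm y"] by (simp add: power2_eq_square algebra_simps)
  finally have "- (x \<bullet> M y) \<le> (norm x)\<^sup>2 + (norm y)\<^sup>2" .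
  moreover have "\<beta> * (norm y)\<^sup>2 \<le> (norm y)\<^sup>2"
    using beta_le_1 beta_pos by (intro mult_left_le_one_le) auto
  ultimately show ?thesis unfolding V_def by simp
qed

lemma sqrt_V_add_le: "sqrt (V (x + u) y) \<le> sqrt (V x y) + norm u"
proof -
  let ?z = "x - (1/2) *\<^sub>R M y"
  have expand: "V (x + u) y = V x y + 2 * (u \<bullet> ?z) + (norm u)\<^sup>2"
    unfolding V_def power2_norm_eq_inner
    by (simp add: inner_add_left inner_add_right inner_diff_right inner_commute[of x u] algebra_simps)
  have "(norm ?z)\<^sup>2 \<le> V x y"
    using V_complete_square[of x y] V_residual_lower[of y] zero_le_power2[of "\<delta> * norm y"]
    unfolding power_mult_distrib by linarith
  then have "norm ?z \<le> sqrt (V x y)" by (simp add: real_le_rsqrt)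
  then have "u \<bullet> ?z \<le> norm u * sqrt (V x y)"
    using order_trans[OF abs_ge_self Cauchy_Schwarz_ineq2, of u ?z] mult_left_mono[of _ _ "norm u"] by force
  then have "V (x + u) y \<le> (sqrt (V x y) + norm u)\<^sup>2"
    unfolding expand using V_nonneg[of x y] by (simp add: power2_sum algebra_simps)
  then show ?thesis by (simp add: real_sqrt_le_iff real_le_lsqrt V_nonneg)
qed

lemma stack_norm_le_sqrt_V: "stack_norm x y \<le> 2 / \<delta> * sqrt (V x y)"
proof -
  have "(norm x)\<^sup>2 + (norm y)\<^sup>2 \<le> (2 / \<delta>)\<^sup>2 * V x y"
    using V_lower[of x y] delta_pos by (simp add: power2_eq_square field_simps)
  then have "sqrt ((norm x)\<^sup>2 + (norm y)\<^sup>2) \<le> sqrt ((2 / \<delta>)\<^sup>2 * V x y)"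
    by (rule real_sqrt_le_mono)
  also have "\<dots> = 2 / \<delta> * sqrt (V x y)" using delta_pos by (simp add: real_sqrt_mult)
  finally show ?thesis unfolding stack_norm_def .
qed

lemma sqrt_V_le_stack_norm: "sqrt (V x y) \<le> sqrt 2 * stack_norm x y"
  unfolding stack_norm_def real_sqrt_mult[symmetric] using V_upper by simp

lemma sqrt_V_perturbed_step: "sqrt (V (M x - \<beta> *\<^sub>R y + u) x) \<le> (1 - \<delta>) * sqrt (V x y) + norm u"
proof -
  have "sqrt \<beta> = 1 - \<delta>" using delta_le by (simp add: \<beta>_def)
  then have "sqrt (V (M x - \<beta> *\<^sub>R y) x) = (1 - \<delta>) * sqrt (V x y)"
    by (simp add: V_linear_step real_sqrt_mult)
  then show ?thesis using sqrt_V_add_le[of "M x - \<beta> *\<^sub>R y" u x] by simp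
qed

lemma perturbed_heavy_ball_convergence:
  fixes x y u :: "nat \<Rightarrow> 'a"
  assumes x_step: "\<And>n. x (Suc n) = M (x n) - \<beta> *\<^sub>R y n + u n"
    and y_step: "\<And>n. y (Suc n) = x n"
    and perturbation: "\<And>n. norm (u n) \<le> C * (norm (x n))\<^sup>2" and C: "0 \<le> C"
    and small: "C * stack_norm (x 0) (y 0) \<le> \<delta> ^ 3 / 12"
  shows "stack_norm (x n) (y n) \<le> (1 - \<delta> / 2) ^ n * (2 * sqrt 2 / \<delta>) * stack_norm (x 0) (y 0)"
proof -
  define N where "N n = sqrt (V (x n) (y n))" for n
  have N_nonneg: "0 \<le> N n" for n by (simp add: N_def V_nonneg)
  have "norm (x n) \<le> stack_norm (x n) (y n)" for n by (simp add: stack_norm_def real_le_rsqrt)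
  then have x_le: "norm (x n) \<le> 2 / \<delta> * N n" for n using stack_norm_le_sqrt_V order_trans N_def by metis
  have step: "N (Suc n) \<le> (1 - \<delta>) * N n + 4 * C / \<delta>\<^sup>2 * (N n)\<^sup>2" for n
  proof -
    have "N (Suc n) \<le> (1 - \<delta>) * N n + norm (u n)"
      unfolding N_def x_step y_step by (rule sqrt_V_perturbed_step)
    also have "norm (u n) \<le> C * (2 / \<delta> * N n)\<^sup>2"
      using perturbation[of n] mult_left_mono[OF power_mono[OF x_le] C] by (simp add: order_trans)
    finally show ?thesis by (simp add: power_mult_distrib power_divide mult_ac)
  qed
  have "sqrt 2 \<le> (3/2 :: real)" by (rule real_le_lsqrt) (auto simp: power2_eq_square)
  then have small': "sqrt 2 * (C * stack_norm (x 0) (y 0)) \<le> 3/2 * (\<delta> ^ 3 / 12)"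
    using small C by (intro mult_mono) (auto simp: stack_norm_def)
  have "4 * C / \<delta>\<^sup>2 * N 0 \<le> 4 * C / \<delta>\<^sup>2 * (sqrt 2 * stack_norm (x 0) (y 0))"
    unfolding N_def using C by (intro mult_left_mono sqrt_V_le_stack_norm) auto
  also have "\<dots> = 4 / \<delta>\<^sup>2 * (sqrt 2 * (C * stack_norm (x 0) (y 0)))" by simp
  also have "\<dots> \<le> 4 / \<delta>\<^sup>2 * (3/2 * (\<delta> ^ 3 / 12))" using small' by (rule mult_left_mono) simp
  also have "\<dots> = \<delta> / 2" using delta_pos by (simp add: power2_eq_square power3_eq_cube)
  finally have "N n \<le> (1 - \<delta> / 2) ^ n * N 0"
    using delta_pos delta_le C
    by (intro contraction_with_quadratic_perturbation[where N = N and C = "4 * C / \<delta>\<^sup>2", OF step N_nonneg])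
      auto
  have "stack_norm (x n) (y n) \<le> 2 / \<delta> * N n" unfolding N_def by (rule stack_norm_le_sqrt_V)
  also have "\<dots> \<le> 2 / \<delta> * ((1 - \<delta> / 2) ^ n * N 0)"
    using \<open>N n \<le> (1 - \<delta> / 2) ^ n * N 0\<close> delta_pos by (intro mult_left_mono) auto
  also have "\<dots> \<le> 2 / \<delta> * ((1 - \<delta> / 2) ^ n * (sqrt 2 * stack_norm (x 0) (y 0)))"
    unfolding N_def using delta_pos delta_le by (intro mult_left_mono sqrt_V_le_stack_norm) auto
  finally show ?thesis by (simp add: mult_ac)
qed

end

lemma (in lipschitz_hessian) momentum_lyapunov_at_minimum:
  assumes mu: "0 < \<mu>" and sconv: "strongly_convex \<mu> f"
    and smooth: "\<And>u v. norm (grad u - grad v) \<le> \<alpha> * norm (u - v)"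
    and crit: "grad p = 0"
    and \<delta>: "0 < \<delta>" "\<delta> \<le> 1/2" "\<mu> = 4 * \<delta>\<^sup>2 * \<alpha>"
  shows "momentum_lyapunov (\<lambda>v. hess p *v v) \<mu> \<alpha> (1 / \<alpha>) \<delta>"
proof
  have \<alpha>: "0 < \<alpha>" using mu \<delta> by (simp add: zero_less_mult_iff)
  show lower: "\<mu> * (norm y)\<^sup>2 \<le> y \<bullet> (hess p *v y)" for y
    by (rule hessian_lower_bound_at_critical[OF crit sconv])
  show "(norm (hess p *v y))\<^sup>2 \<le> \<alpha> * (y \<bullet> (hess p *v y))" for y
  proof (rule cocoercive_of_symmetric_bounded[OF matrix_vector_mul_linear _ _ _ \<alpha>])
    show "0 \<le> y \<bullet> (hess p *v y)" for y using lower[of y] mu by (meson order_trans zero_le_mult_iff zero_le_power2 less_imp_le)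
  qed (use hessian_symmetric hessian_bound_of_gradient_lipschitz[OF smooth] in auto)
  show "1 / \<alpha> * \<mu> = 4 * \<delta>\<^sup>2" using \<alpha> \<delta> by simp
qed (use hessian_symmetric mu \<delta> in \<open>auto simp: zero_less_mult_iff\<close>)

lemma (in lipschitz_hessian) heavy_ball_local_convergence:
  fixes w :: "int \<Rightarrow> real^'d"
  assumes mu: "0 < \<mu>" and sconv: "strongly_convex \<mu> f"
    and smooth: "\<And>u v. norm (grad u - grad v) \<le> \<alpha> * norm (u - v)"
    and minimum: "\<And>x. f wstar \<le> f x"
    and \<delta>: "0 < \<delta>" "\<delta> \<le> 1/2" "\<mu> = 4 * \<delta>\<^sup>2 * \<alpha>"
    and hb: "\<And>t::int. t \<ge> 0 \<Longrightarrow>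
       w (t + 1) = w t - (1 / \<alpha>) *\<^sub>R grad (w t) + ((1 - \<delta>)\<^sup>2) *\<^sub>R (w t - w (t - 1))"
    and init: "L * stack_norm (w 0 - wstar) (w (-1) - wstar) \<le> \<alpha> * \<delta> ^ 3 / 12"
  shows "stack_norm (w (int n) - wstar) (w (int n - 1) - wstar)
           \<le> (1 - \<delta> / 2) ^ n * (2 * sqrt 2 / \<delta>) * stack_norm (w 0 - wstar) (w (-1) - wstar)"
proof -
  have \<alpha>: "0 < \<alpha>" using mu \<delta> by (simp add: zero_less_mult_iff)
  have crit: "grad wstar = 0" by (rule grad_eq_0_at_minimum[OF has_gradient minimum])
  interpret momentum_lyapunov "\<lambda>v. hess wstar *v v" \<mu> \<alpha> "1 / \<alpha>" \<delta>
    by (rule momentum_lyapunov_at_minimum[OF mu sconv smooth crit \<delta>])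
  define x where "x n = w (int n) - wstar" for n
  define y where "y n = w (int n - 1) - wstar" for n
  define u where "u n = (1 / \<alpha>) *\<^sub>R (hess wstar *v x n - grad (w (int n)))" for n
  have "x (Suc n) = M (x n) - \<beta> *\<^sub>R y n + u n" for n
    using hb[of "int n"] by (simp add: x_def y_def u_def M_def \<beta>_def add.commute algebra_simps)
  moreover have "y (Suc n) = x n" for n by (simp add: x_def y_def)
  moreover have "norm (u n) \<le> L / \<alpha> * (norm (x n))\<^sup>2" for n
    using gradient_linearization_error[of "w (int n)" wstar] crit \<alpha>
    by (simp add: u_def x_def norm_minus_commute divide_right_mono)
  moreover have "L / \<alpha> * stack_norm (x 0) (y 0) \<le> \<delta> ^ 3 / 12"
    using init \<alpha> by (simp add: x_def y_def field_simps)
  ultimately show ?thesis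
    using perturbed_heavy_ball_convergence[of x y u "L / \<alpha>" n] L_nonneg \<alpha> by (simp add: x_def y_def)
qed

theorem theorem8:
  fixes f :: "real^'d \<Rightarrow> real"
    and grad :: "real^'d \<Rightarrow> real^'d"
    and hess :: "real^'d \<Rightarrow> real^'d^'d"
    and \<mu> \<alpha> :: real
    and wstar :: "real^'d"
    and w :: "int \<Rightarrow> real^'d"
  assumes grad: "\<And>x. (f has_derivative (\<lambda>h. grad x \<bullet> h)) (at x)"
    and hess: "\<And>x. (grad has_derivative (\<lambda>h. hess x *v h)) (at x)"
    and mu_pos: "0 < \<mu>" and mu_le: "\<mu> \<le> \<alpha>"
    and sconv: "strongly_convex \<mu> f"
    and smooth: "\<And>u v. norm (grad u - grad v) \<le> \<alpha> * norm (u - v)"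
    and hess_lip: "\<And>u v. onorm (\<lambda>h. (hess u - hess v) *v h) \<le> \<alpha> * norm (u - v)"
    and wstar_min: "\<And>x. f wstar \<le> f x"
    and hb: "\<And>t::int. t \<ge> 0 \<Longrightarrow>
       w (t + 1) = w t - (1 / \<alpha>) *\<^sub>R grad (w t)
                   + ((1 - 1 / (2 * sqrt (\<alpha> / \<mu>)))\<^sup>2) *\<^sub>R (w t - w (t - 1))"
    and init: "stack_norm (w 0 - wstar) (w (-1) - wstar) \<le> 1 / (683 * (\<alpha> / \<mu>) powr (3/2))"
  shows "\<forall>t::nat. stack_norm (w (int t + 1) - wstar) (w (int t) - wstar)
           \<le> (1 - 1 / (4 * sqrt (\<alpha> / \<mu>))) ^ (t + 1) * (8 * sqrt (\<alpha> / \<mu>))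
              * stack_norm (w 0 - wstar) (w (-1) - wstar)"
proof -
  define \<kappa> where "\<kappa> = \<alpha> / \<mu>"
  define \<delta> where "\<delta> = 1 / (2 * sqrt \<kappa>)"
  define S where "S = stack_norm (w 0 - wstar) (w (-1) - wstar)"
  interpret lipschitz_hessian f grad hess \<alpha>
    using grad hess hess_lip mu_pos mu_le by unfold_locales auto
  have \<kappa>: "1 \<le> \<kappa>" using mu_pos mu_le by (simp add: \<kappa>_def)
  have \<delta>: "0 < \<delta>" "\<delta> \<le> 1/2" "\<mu> = 4 * \<delta>\<^sup>2 * \<alpha>"
    using \<kappa> mu_pos by (auto simp: \<delta>_def \<kappa>_def power2_eq_square)
  \<comment> \<open>\<open>\<delta>\<^sup>3 / 12 = 1 / (96 \<kappa>\<^sup>3\<^sup>/\<^sup>2)\<close>, so the constant 683 leaves room to spare\<close>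
  have "\<alpha> * S \<le> \<alpha> * \<delta> ^ 3 / 12"
    using init mu_pos mu_le \<kappa> by (auto simp: S_def \<kappa>_def[symmetric] \<delta>_def powr_three_halves field_simps)
  note convergence = heavy_ball_local_convergence[OF mu_pos sconv smooth wstar_min \<delta>
      hb[folded \<kappa>_def, folded \<delta>_def] this[unfolded S_def]]
  have "2 * sqrt 2 / \<delta> * S \<le> 8 * sqrt \<kappa> * S"
    using \<kappa> real_le_lsqrt[of 2 2] by (intro mult_right_mono) (auto simp: \<delta>_def S_def stack_norm_def)
  have "stack_norm (w (int t + 1) - wstar) (w (int t) - wstar) \<le> (1 - \<delta> / 2) ^ (t + 1) * (8 * sqrt \<kappa>) * S"
    for t
  proof -
    have "stack_norm (w (int t + 1) - wstar) (w (int t) - wstar) \<le> (1 - \<delta> / 2) ^ (t + 1) * (2 * sqrt 2 / \<delta> * S)"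
      using convergence[of "Suc t"] by (simp add: S_def add.commute mult.assoc)
    also have "\<dots> \<le> (1 - \<delta> / 2) ^ (t + 1) * (8 * sqrt \<kappa> * S)"
      using \<open>2 * sqrt 2 / \<delta> * S \<le> 8 * sqrt \<kappa> * S\<close> \<delta> by (intro mult_left_mono) auto
    finally show ?thesis by (simp add: mult.assoc)
  qed
  moreover have "1 - \<delta> / 2 = 1 - 1 / (4 * sqrt \<kappa>)" by (simp add: \<delta>_def)
  ultimately show ?thesis unfolding \<kappa>_def S_def by simp
qed

end
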